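(* Let $\mathcal C$ be a set of cycles and $m\ge1$. There exists a nonsingular $m$-stage FSR $f$ with $\Omega(f)=\mathcal C$ if and only if (i) $\sum_{c\in\mathcal C}\mathrm{per}(c)=2^m$, and (ii) the map $v\mapsto \mathrm{lbit}_m(v)$ is injective on $\bigcup_{c\in\mathcal C}\Omega_{m+1}(c)$.
   Context: An $m$-stage FSR with feedback logic $f_1:\{0,1\}^m\to\{0,1\}$ has state transformation $F(x_0,\dots,x_{m-1})=(x_1,\dots,x_{m-1},f_1(x_0,\dots,x_{m-1}))$ and generates the binary sequences $s:\mathbb Z\to\{0,1\}$ with $s(t+m)=f_1(s(t),\dots,s(t+m-1))$ for all $t$; it is nonsingular if $F$ is bijective. A periodic sequence $s$ of least period $p$ determines the cycle $[s(0),\dots,s(p-1)]$ (shifts of $s$ give the same cycle), with $\mathrm{per}(c)=p$. The cycle structure $\Omega(f)$ is the set of cycles of the sequences generated by $f$. For a cycle $c$ given by $s$ with period $p$, $\Omega_k(c)=\{(s(i),s((i+1)\bmod p),\dots,s((i+k-1)\bmod p)):0\le i<p\}\subseteq\{0,1\}^k$. For $v=(a_1,\dots,a_{m+1})$, $\mathrm{lbit}_m(v)=(a_2,\dots,a_{m+1})$ (last $m$ coordinates). *)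

theory Defs
  imports Main
begin

definition window :: "(int \<Rightarrow> bool) \<Rightarrow> int \<Rightarrow> nat \<Rightarrow> bool list" where
  "window s i k = map (\<lambda>j. s (i + int j)) [0..<k]"

definition periodic_seq :: "(int \<Rightarrow> bool) \<Rightarrow> bool" where
  "periodic_seq s \<longleftrightarrow> (\<exists>p::nat. p > 0 \<and> (\<forall>t. s (t + int p) = s t))"

definition least_period :: "(int \<Rightarrow> bool) \<Rightarrow> nat" where
  "least_period s = (LEAST p::nat. p > 0 \<and> (\<forall>t. s (t + int p) = s t))"

definition cycle_of :: "(int \<Rightarrow> bool) \<Rightarrow> (int \<Rightarrow> bool) set" where
  "cycle_of s = {(\<lambda>t. s (t + k)) | k. True}"

definition is_cycle :: "(int \<Rightarrow> bool) set \<Rightarrow> bool" where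
  "is_cycle c \<longleftrightarrow> (\<exists>s. periodic_seq s \<and> c = cycle_of s)"

definition per :: "(int \<Rightarrow> bool) set \<Rightarrow> nat" where
  "per c = least_period (SOME s. s \<in> c)"

definition Omega_k :: "nat \<Rightarrow> (int \<Rightarrow> bool) set \<Rightarrow> bool list set" where
  "Omega_k k c = {window s 0 k | s. s \<in> c}"

definition lbit :: "nat \<Rightarrow> bool list \<Rightarrow> bool list" where
  "lbit m v = drop (length v - m) v"

text \<open>FSR with feedback logic f1 on m-bit states (bool lists of length m).\<close>
definition fsr_F :: "(bool list \<Rightarrow> bool) \<Rightarrow> bool list \<Rightarrow> bool list" where
  "fsr_F f1 x = tl x @ [f1 x]"

definition nonsingular :: "nat \<Rightarrow> (bool list \<Rightarrow> bool) \<Rightarrow> bool" where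
  "nonsingular m f1 \<longleftrightarrow> bij_betw (fsr_F f1) {x. length x = m} {x. length x = m}"

definition generates :: "nat \<Rightarrow> (bool list \<Rightarrow> bool) \<Rightarrow> (int \<Rightarrow> bool) \<Rightarrow> bool" where
  "generates m f1 s \<longleftrightarrow> (\<forall>t. s (t + int m) = f1 (window s t m))"

definition cycle_structure :: "nat \<Rightarrow> (bool list \<Rightarrow> bool) \<Rightarrow> (int \<Rightarrow> bool) set set" where
  "cycle_structure m f1 = {cycle_of s | s. generates m f1 s \<and> periodic_seq s}"

end

(*
  A nonsingular FSR is deterministic in both time directions. Hence distinct cycles have disjoint
  sets of m-windows, a cycle of period p has exactly p of them, and an (m + 1)-window is determined
  by its last m bits, i.e. by the following state. Since every state lies on a cycle, the periods
  add up to 2^m.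

  Conversely, under (ii) the feedback "last bit of the (m + 1)-window of a cycle that starts with
  the current state" is well defined and generates every cycle of C, and its state transformation
  is injective on their m-windows. These are then counted by the periods, so by (i) they are all
  2^m states: the FSR is nonsingular and has no further cycles.
*)
theory Submission
  imports Defs "HOL-Combinatorics.Cycles"
begin

lemma length_window [simp]: "length (window s t k) = k"
  by (simp add: window_def)

lemma nth_window [simp]: "j < k \<Longrightarrow> window s t k ! j = s (t + int j)"
  by (simp add: window_def)

lemma window_shift: "window (\<lambda>t. s (t + k)) i n = window s (i + k) n"
  by (simp add: window_def add_ac)

lemma window_Suc_Cons: "window s t (Suc k) = s t # window s (t + 1) k"
  by (rule nth_equalityI) (auto simp: nth_Cons' add_ac)

lemma window_Suc_snoc: "window s t (Suc k) = window s t k @ [s (t + int k)]"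
  by (simp add: window_def)

lemma lbit_window: "lbit m (window s t (m + 1)) = window s (t + 1) m"
  by (simp add: lbit_def window_Suc_Cons)

lemma last_window: "last (window s t (m + 1)) = s (t + int m)"
  by (simp add: window_Suc_snoc)

lemma fsr_F_window:
  assumes "1 \<le> m" and "generates m f1 s"
  shows "fsr_F f1 (window s t m) = window s (t + 1) m"
proof -
  obtain k where k: "m = Suc k" using assms(1) by (cases m) auto
  have "s (t + int m) = f1 (window s t m)" using assms(2) by (simp add: generates_def)
  then show ?thesis
    unfolding k fsr_F_def window_Suc_snoc[of s "t + 1"] by (simp add: window_Suc_Cons add_ac)
qed

lemma generates_shift: "generates m f1 s \<Longrightarrow> generates m f1 (\<lambda>t. s (t + k))"
  unfolding generates_def window_shift by (metis add.commute add.left_commute)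

text \<open>Forward in time the windows agree by the recursion, backward by injectivity of the state
  transformation.\<close>
lemma generates_window_eq_shift:
  assumes m: "1 \<le> m" and gen: "generates m f1 s" "generates m f1 s'"
    and inj: "inj_on (fsr_F f1) W"
    and windows: "\<And>t. window s t m \<in> W" "\<And>t. window s' t m \<in> W"
    and eq: "window s a m = window s' b m"
  shows "s (a + t) = s' (b + t)"
proof -
  have forth: "window s (a + int n) m = window s' (b + int n) m" for n
  proof (induction n)
    case (Suc n)
    then show ?case
      using fsr_F_window[OF m gen(1), of "a + int n"] fsr_F_window[OF m gen(2), of "b + int n"]
      by (simp add: add_ac)
  qed (simp add: eq)
  have backward: "window s (a - int n) m = window s' (b - int n) m" for n
  proof (induction n)
    case (Suc n)
    have "fsr_F f1 (window s (a - int (Suc n)) m) = fsr_F f1 (window s' (b - int (Suc n)) m)"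
      using fsr_F_window[OF m gen(1), of "a - int (Suc n)"]
        fsr_F_window[OF m gen(2), of "b - int (Suc n)"] Suc by simp
    then show ?case using inj windows by (meson inj_onD)
  qed (simp add: eq)
  have "window s (a + t) m = window s' (b + t) m"
    using forth[of "nat t"] backward[of "nat (- t)"] by (cases "t \<ge> 0") simp_all
  then show ?thesis
    using nth_window[of 0 m s "a + t"] nth_window[of 0 m s' "b + t"] m by simp
qed

lemma periodic_add_mult:
  assumes "\<And>t. s (t + int p) = s t"
  shows "s (t + q * int p) = s t"
proof -
  have nat_mult: "s (t + int n * int p) = s t" for t n
  proof (induction n arbitrary: t)
    case (Suc n)
    then show ?case using assms[of "t + int n * int p"] by (simp add: algebra_simps)
  qed simp
  show ?thesis
    using nat_mult[of t "nat q"] nat_mult[of "t + q * int p" "nat (- q)"] by (cases "q \<ge> 0") simp_all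
qed

lemma periodic_mod:
  assumes "\<And>t. s (t + int p) = s t"
  shows "s t = s (t mod int p)"
  using periodic_add_mult[of s p, OF assms, of "t mod int p" "t div int p"] by (simp add: add.commute)

lemma
  assumes "periodic_seq s"
  shows least_period_pos: "least_period s > 0"
    and least_period_periodic: "\<And>t. s (t + int (least_period s)) = s t"
    and least_period_least: "\<lbrakk>0 < q; \<forall>t. s (t + int q) = s t\<rbrakk> \<Longrightarrow> least_period s \<le> q"
proof -
  obtain p where "p > 0 \<and> (\<forall>t. s (t + int p) = s t)" using assms periodic_seq_def by blast
  then have "least_period s > 0 \<and> (\<forall>t. s (t + int (least_period s)) = s t)"
    unfolding least_period_def by (rule LeastI)
  then show "least_period s > 0" "\<And>t. s (t + int (least_period s)) = s t" by auto
  show "\<lbrakk>0 < q; \<forall>t. s (t + int q) = s t\<rbrakk> \<Longrightarrow> least_period s \<le> q"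
    unfolding least_period_def by (rule Least_le) simp
qed

lemma shift_periodic_iff: "(\<forall>t. s (t + int p + k) = s (t + k)) \<longleftrightarrow> (\<forall>t. s (t + int p) = s t)"
  by (metis add.commute add.left_commute diff_add_cancel)

lemma least_period_shift: "least_period (\<lambda>t. s (t + k)) = least_period s"
  unfolding least_period_def using shift_periodic_iff[of s] by simp

lemma periodic_seq_shift: "periodic_seq s \<Longrightarrow> periodic_seq (\<lambda>t. s (t + k))"
  unfolding periodic_seq_def using shift_periodic_iff[of s] by simp

lemma mem_cycle_of_iff: "s' \<in> cycle_of s \<longleftrightarrow> (\<exists>k. s' = (\<lambda>t. s (t + k)))"
  unfolding cycle_of_def by auto

lemma self_mem_cycle_of: "s \<in> cycle_of s"
  unfolding mem_cycle_of_iff by (rule exI[of _ 0]) simp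

lemma cycle_of_eq:
  assumes "s' \<in> cycle_of s"
  shows "cycle_of s' = cycle_of s"
proof -
  obtain k where k: "s' = (\<lambda>t. s (t + k))" using assms mem_cycle_of_iff by blast
  have "(\<lambda>t. s' (t + j)) = (\<lambda>t. s (t + (j + k)))"
    and "(\<lambda>t. s (t + j)) = (\<lambda>t. s' (t + (j - k)))" for j
    using k by (simp_all add: add_ac)
  then show ?thesis unfolding cycle_of_def by blast
qed

lemma per_cycle_of: "per (cycle_of s) = least_period s"
proof -
  obtain k where "(SOME x. x \<in> cycle_of s) = (\<lambda>t. s (t + k))"
    using someI[of "\<lambda>x. x \<in> cycle_of s", OF self_mem_cycle_of] mem_cycle_of_iff by blast
  then show ?thesis unfolding per_def by (simp add: least_period_shift)
qed

lemma Omega_k_cycle_of: "Omega_k k (cycle_of s) = range (\<lambda>i. window s i k)"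
  unfolding Omega_k_def mem_cycle_of_iff
  by (auto simp: window_shift) (metis add_0 window_shift)

lemma
  assumes "is_cycle c" and "s \<in> c"
  shows is_cycle_eq_cycle_of: "c = cycle_of s"
    and is_cycle_periodic: "periodic_seq s"
proof -
  obtain s0 where s0: "periodic_seq s0" "c = cycle_of s0" using assms(1) is_cycle_def by blast
  then show "c = cycle_of s" using cycle_of_eq assms(2) by simp
  obtain k where "s = (\<lambda>t. s0 (t + k))" using assms(2) s0(2) mem_cycle_of_iff by blast
  then show "periodic_seq s" using periodic_seq_shift s0(1) by simp
qed

lemma is_cycle_nonempty: "is_cycle c \<Longrightarrow> \<exists>s. s \<in> c"
  unfolding is_cycle_def using self_mem_cycle_of by blast

lemma window_in_Omega_k: "is_cycle c \<Longrightarrow> s \<in> c \<Longrightarrow> window s t k \<in> Omega_k k c"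
  using is_cycle_eq_cycle_of Omega_k_cycle_of by blast

lemma Omega_kE:
  assumes "v \<in> Omega_k k c"
  obtains s where "s \<in> c" "v = window s 0 k"
  using assms unfolding Omega_k_def by blast

lemma Omega_k_length: "v \<in> Omega_k k c \<Longrightarrow> length v = k"
  by (auto elim: Omega_kE)

lemma finite_lists_length: "finite {x::bool list. length x = n}"
  using finite_lists_length_eq[of "UNIV::bool set" n] by simp

lemma card_lists_length: "card {x::bool list. length x = n} = 2 ^ n"
  using card_lists_length_eq[of "UNIV::bool set" n] by simp

locale fsr_cycles =
  fixes m :: nat and f1 :: "bool list \<Rightarrow> bool" and C :: "(int \<Rightarrow> bool) set set"
  assumes stages: "1 \<le> m"
    and cycles: "\<And>c. c \<in> C \<Longrightarrow> is_cycle c"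
    and generated: "\<And>c s. c \<in> C \<Longrightarrow> s \<in> c \<Longrightarrow> generates m f1 s"
    and inj_on_states: "inj_on (fsr_F f1) (\<Union>c\<in>C. Omega_k m c)"
begin

lemma window_in_states: "c \<in> C \<Longrightarrow> s \<in> c \<Longrightarrow> window s t m \<in> (\<Union>c\<in>C. Omega_k m c)"
  using window_in_Omega_k cycles by blast

lemma shift_eq_of_window_eq:
  assumes "c \<in> C" "s \<in> c" "c' \<in> C" "s' \<in> c'" and "window s a m = window s' b m"
  shows "s (a + t) = s' (b + t)"
  using generates_window_eq_shift[OF stages generated generated inj_on_states] window_in_states assms
  by blast

lemma Omega_k_disjoint:
  assumes "c \<in> C" "c' \<in> C" "c \<noteq> c'"
  shows "Omega_k m c \<inter> Omega_k m c' = {}"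
proof (rule ccontr)
  assume "Omega_k m c \<inter> Omega_k m c' \<noteq> {}"
  then obtain s s' where s: "s \<in> c" "s' \<in> c'" "window s 0 m = window s' 0 m"
    by (metis Int_emptyI Omega_kE)
  then have "s = s'" using shift_eq_of_window_eq[OF assms(1) s(1) assms(2) s(2)] by fastforce
  then show False using s assms cycles is_cycle_eq_cycle_of by metis
qed

lemma finite_cycles: "finite C"
proof -
  have "Omega_k m c \<noteq> {}" if "c \<in> C" for c
    using that cycles is_cycle_nonempty window_in_Omega_k by blast
  then have "inj_on (Omega_k m) C"
    using Omega_k_disjoint by (metis Int_absorb inj_onI)
  moreover have "Omega_k m ` C \<subseteq> Pow {x. length x = m}"
    by (auto dest: Omega_k_length)
  ultimately show ?thesis
    using finite_lists_length inj_on_finite by blast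
qed

text \<open>The windows of a cycle at the positions of one period are pairwise distinct, since a
  repeated window would, by determinism, give a shorter period.\<close>
lemma card_Omega_k: "c \<in> C \<Longrightarrow> card (Omega_k m c) = per c"
proof -
  assume c: "c \<in> C"
  obtain s where s: "s \<in> c" using c cycles is_cycle_nonempty by blast
  have cs: "c = cycle_of s" "periodic_seq s"
    using is_cycle_eq_cycle_of[OF cycles[OF c] s] is_cycle_periodic[OF cycles[OF c] s] by simp_all
  define p where "p = least_period s"
  have p: "p > 0" "\<And>t. s (t + int p) = s t"
    unfolding p_def using least_period_pos least_period_periodic cs(2) by auto
  have "s (t + int j) = s (t mod int p + int j)" for t j
    using periodic_mod[of s p, OF p(2)] by (metis mod_add_left_eq)
  then have "window s t m = window s (int (nat (t mod int p))) m" for t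
    unfolding window_def using p(1) by simp
  moreover have "nat (t mod int p) \<in> {..<p}" for t using p(1) by (simp add: nat_less_iff)
  ultimately have "range (\<lambda>t. window s t m) \<subseteq> (\<lambda>i. window s (int i) m) ` {..<p}"
    by blast
  then have image: "Omega_k m c = (\<lambda>i. window s (int i) m) ` {..<p}"
    unfolding cs(1) Omega_k_cycle_of by auto
  have inj: "inj_on (\<lambda>i. window s (int i) m) {..<p}"
  proof (rule inj_onI, rule ccontr)
    have no_repeat: False if ij: "i < j" "j < p" "window s (int i) m = window s (int j) m" for i j
    proof -
      have "s (t + int (j - i)) = s t" for t
        using shift_eq_of_window_eq[OF c s c s ij(3), of "t - int i"] ij(1)
        by (simp add: algebra_simps)
      then have "p \<le> j - i"
        unfolding p_def using least_period_least[OF cs(2), of "j - i"] ij(1) by simp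
      then show False using ij by simp
    qed
    fix i j assume "i \<in> {..<p}" "j \<in> {..<p}" "window s (int i) m = window s (int j) m" "i \<noteq> j"
    then show False using no_repeat[of i j] no_repeat[of j i] by (cases "i < j") auto
  qed
  then show ?thesis
    using card_image[OF inj] image per_cycle_of[of s] cs(1) p_def by simp
qed

lemma card_states: "card (\<Union>c\<in>C. Omega_k m c) = (\<Sum>c\<in>C. per c)"
proof -
  have "finite (Omega_k m c)" for c
    by (rule finite_subset[OF _ finite_lists_length[of m]]) (auto dest: Omega_k_length)
  then have "card (\<Union>c\<in>C. Omega_k m c) = (\<Sum>c\<in>C. card (Omega_k m c))"
    by (intro card_UN_disjoint finite_cycles ballI impI Omega_k_disjoint) simp_all
  also have "\<dots> = (\<Sum>c\<in>C. per c)" using card_Omega_k by simp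
  finally show ?thesis .
qed

lemma inj_on_lbit: "inj_on (lbit m) (\<Union>c\<in>C. Omega_k (m + 1) c)"
proof (rule inj_onI)
  fix v v' assume "v \<in> (\<Union>c\<in>C. Omega_k (m + 1) c)" "v' \<in> (\<Union>c\<in>C. Omega_k (m + 1) c)"
    and lbit_eq: "lbit m v = lbit m v'"
  then obtain c c' s s' where s: "c \<in> C" "s \<in> c" "v = window s 0 (m + 1)"
    and s': "c' \<in> C" "s' \<in> c'" "v' = window s' 0 (m + 1)"
    by (auto elim!: Omega_kE)
  have "window s 1 m = window s' 1 m" using lbit_eq unfolding s(3) s'(3) lbit_window by simp
  then have "s (1 + (t - 1)) = s' (1 + (t - 1))" for t
    using shift_eq_of_window_eq[OF s(1,2) s'(1,2)] by blast
  then have "s = s'" by auto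
  then show "v = v'" using s s' by simp
qed

end

lemma (in fsr_cycles) nonsingular_and_cycle_structure:
  assumes "(\<Sum>c\<in>C. per c) = 2 ^ m"
  shows "nonsingular m f1" and "cycle_structure m f1 = C"
proof -
  let ?S = "{x::bool list. length x = m}"
  have "(\<Union>c\<in>C. Omega_k m c) \<subseteq> ?S" by (auto dest: Omega_k_length)
  moreover have "card (\<Union>c\<in>C. Omega_k m c) = card ?S"
    using card_states assms card_lists_length by simp
  ultimately have states: "(\<Union>c\<in>C. Omega_k m c) = ?S"
    by (rule card_subset_eq[OF finite_lists_length])
  have "fsr_F f1 ` ?S \<subseteq> ?S" using stages by (auto simp: fsr_F_def)
  then have "fsr_F f1 ` ?S = ?S"
    using endo_inj_surj finite_lists_length inj_on_states states by metis
  then show "nonsingular m f1"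
    unfolding nonsingular_def bij_betw_def using inj_on_states states by simp
  show "cycle_structure m f1 = C"
  proof
    show "cycle_structure m f1 \<subseteq> C"
    proof
      fix c' assume "c' \<in> cycle_structure m f1"
      then obtain s where s: "c' = cycle_of s" "generates m f1 s"
        unfolding cycle_structure_def by blast
      have "window s 0 m \<in> (\<Union>c\<in>C. Omega_k m c)" using states by simp
      then obtain c s' where s': "c \<in> C" "s' \<in> c" "window s 0 m = window s' 0 m"
        by (auto elim: Omega_kE)
      have "s (0 + t) = s' (0 + t)" for t
        by (rule generates_window_eq_shift[OF stages s(2) generated[OF s'(1,2)] inj_on_states])
          (simp_all add: states s'(3))
      then have "s = s'" by auto
      moreover have "c = cycle_of s'" by (rule is_cycle_eq_cycle_of[OF cycles[OF s'(1)] s'(2)])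
      ultimately show "c' \<in> C" using s(1) s'(1) by simp
    qed
    show "C \<subseteq> cycle_structure m f1"
    proof
      fix c assume c: "c \<in> C"
      then obtain s where s: "s \<in> c" using cycles is_cycle_nonempty by blast
      have "c = cycle_of s" "periodic_seq s" "generates m f1 s"
        using is_cycle_eq_cycle_of[OF cycles[OF c] s] is_cycle_periodic[OF cycles[OF c] s]
          generated[OF c s] by simp_all
      then show "c \<in> cycle_structure m f1" unfolding cycle_structure_def by blast
    qed
  qed
qed

lemma generates_state_orbit:
  assumes m: "1 \<le> m" and len: "\<And>t. length (X t) = m"
    and orbit: "\<And>t. X (t + 1) = fsr_F f1 (X t)"
  shows "window (\<lambda>t. hd (X t)) t m = X t" and "generates m f1 (\<lambda>t. hd (X t))"
proof -
  have nth_orbit: "X t ! j = hd (X (t + int j))" if "j < m" for t j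
    using that
  proof (induction j arbitrary: t)
    case 0
    then have "X t \<noteq> []" using len[of t] by auto
    then show ?case by (simp add: hd_conv_nth)
  next
    case (Suc j)
    have "X t ! Suc j = X (t + 1) ! j"
      using orbit[of t] len[of t] Suc.prems by (simp add: fsr_F_def nth_append nth_tl less_diff_conv)
    then show ?case using Suc by (simp add: add_ac)
  qed
  show windows: "window (\<lambda>t. hd (X t)) t m = X t" for t
    by (rule nth_equalityI) (simp_all add: len nth_orbit)
  show "generates m f1 (\<lambda>t. hd (X t))"
    unfolding generates_def
  proof
    fix t
    have "hd (X (t + int m)) = X (t + 1) ! (m - 1)"
      using nth_orbit[of "m - 1" "t + 1"] m by (simp add: add_ac)
    also have "\<dots> = f1 (X t)"
      using orbit[of t] len[of t] by (simp add: fsr_F_def nth_append)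
    finally show "hd (X (t + int m)) = f1 (window (\<lambda>t. hd (X t)) t m)" by (simp add: windows)
  qed
qed

text \<open>Extended by the identity to lists of other lengths, the state transformation of a
  nonsingular FSR is a permutation of a finite set and hence has finite order.\<close>
lemma nonsingular_state_on_periodic_seq:
  assumes m: "1 \<le> m" and ns: "nonsingular m f1" and x: "length x = m"
  obtains s where "generates m f1 s" "periodic_seq s" "window s 0 m = x"
proof -
  let ?S = "{x::bool list. length x = m}"
  define P where "P y = (if length y = m then fsr_F f1 y else y)" for y
  have "bij_betw P ?S ?S"
    using ns unfolding nonsingular_def P_def by (rule bij_betw_cong[THEN iffD1, rotated]) simp
  then have perm: "P permutes ?S" by (rule bij_imp_permutes) (simp add: P_def)
  then have "permutation P" using finite_lists_length permutation_permutes by blast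
  then obtain n where n: "P ^^ n = id" "n > 0" by (rule permutation_is_nilpotent)
  have "(P ^^ k) x \<in> ?S" for k
    using permutes_in_image[OF permutes_funpow[OF perm]] x by blast
  then have len: "length ((P ^^ k) x) = m" for k by simp
  define X where "X t = (P ^^ nat (t mod int n)) x" for t
  have "X (t + 1) = P (X t)" for t
  proof -
    have "(t + 1) mod int n = (t mod int n + 1) mod int n" by (simp add: mod_add_left_eq)
    also have "t mod int n + 1 = int (Suc (nat (t mod int n)))" using n(2) by simp
    finally have "nat ((t + 1) mod int n) = Suc (nat (t mod int n)) mod n"
      by (simp add: nat_mod_as_int)
    then have "X (t + 1) = (P ^^ (Suc (nat (t mod int n)) mod n)) x" by (simp add: X_def)
    also have "\<dots> = (P ^^ Suc (nat (t mod int n))) x"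
      using funpow_mod_eq[of n P x] n by simp
    finally show ?thesis by (simp add: X_def)
  qed
  then have orbit: "X (t + 1) = fsr_F f1 (X t)" for t by (simp add: P_def X_def len)
  have lenX: "length (X t) = m" for t by (simp add: X_def len)
  have "periodic_seq (\<lambda>t. hd (X t))"
    unfolding periodic_seq_def X_def using n(2) by (intro exI[of _ n]) simp
  then show ?thesis
    using that generates_state_orbit[of m X f1, OF m lenX orbit] by (simp add: X_def)
qed

lemma fsr_cycles_cycle_structure:
  assumes m: "1 \<le> m" and ns: "nonsingular m f1"
  shows "fsr_cycles m f1 (cycle_structure m f1)"
proof
  show "1 \<le> m" by (fact m)
  fix c assume "c \<in> cycle_structure m f1"
  then obtain s0 where s0: "c = cycle_of s0" "generates m f1 s0" "periodic_seq s0"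
    unfolding cycle_structure_def by blast
  then show "is_cycle c" unfolding is_cycle_def by blast
  fix s assume "s \<in> c"
  then obtain k where "s = (\<lambda>t. s0 (t + k))" using s0(1) mem_cycle_of_iff by blast
  then show "generates m f1 s" using generates_shift[OF s0(2)] by simp
next
  have "inj_on (fsr_F f1) {x. length x = m}"
    using ns unfolding nonsingular_def bij_betw_def by simp
  then show "inj_on (fsr_F f1) (\<Union>c\<in>cycle_structure m f1. Omega_k m c)"
    by (rule inj_on_subset) (auto dest: Omega_k_length)
qed

lemma states_cycle_structure:
  assumes m: "1 \<le> m" and ns: "nonsingular m f1"
  shows "(\<Union>c\<in>cycle_structure m f1. Omega_k m c) = {x. length x = m}"
proof
  show "(\<Union>c\<in>cycle_structure m f1. Omega_k m c) \<subseteq> {x. length x = m}"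
    by (auto dest: Omega_k_length)
  show "{x. length x = m} \<subseteq> (\<Union>c\<in>cycle_structure m f1. Omega_k m c)"
  proof
    fix x :: "bool list" assume "x \<in> {x. length x = m}"
    then obtain s where "generates m f1 s" "periodic_seq s" "window s 0 m = x"
      using nonsingular_state_on_periodic_seq[OF m ns] by auto
    then have "cycle_of s \<in> cycle_structure m f1" "x \<in> Omega_k m (cycle_of s)"
      unfolding cycle_structure_def Omega_k_cycle_of by blast+
    then show "x \<in> (\<Union>c\<in>cycle_structure m f1. Omega_k m c)" by (rule UN_I)
  qed
qed

lemma butlast_image_Omega_k: "is_cycle c \<Longrightarrow> butlast ` Omega_k (k + 1) c = Omega_k k c"
proof -
  assume "is_cycle c"
  then obtain s where "c = cycle_of s" using is_cycle_nonempty is_cycle_eq_cycle_of by metis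
  then show ?thesis by (simp add: Omega_k_cycle_of image_image window_Suc_snoc)
qed

lemma lbit_image_Omega_k: "is_cycle c \<Longrightarrow> lbit k ` Omega_k (k + 1) c = Omega_k k c"
proof -
  assume "is_cycle c"
  then obtain s where "c = cycle_of s" using is_cycle_nonempty is_cycle_eq_cycle_of by metis
  moreover have "range (\<lambda>i. window s (i + 1) k) = range (\<lambda>i. window s i k)"
    by (auto simp: image_iff) (metis diff_add_cancel)
  ultimately show ?thesis by (simp only: Omega_k_cycle_of image_image lbit_window)
qed

definition feedback_of_windows :: "bool list set \<Rightarrow> bool list \<Rightarrow> bool" where
  "feedback_of_windows U x \<longleftrightarrow> (\<exists>v\<in>U. butlast v = x \<and> last v)"

text \<open>Counting shows that \<open>butlast\<close> is injective on the (m + 1)-windows, as \<open>lbit m\<close>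
  is and both map them onto the m-windows; so the feedback is consistent with every cycle.\<close>
lemma fsr_cycles_feedback_of_windows:
  assumes m: "1 \<le> m" and cycles: "\<forall>c\<in>C. is_cycle c"
    and inj_lbit: "inj_on (lbit m) (\<Union>c\<in>C. Omega_k (m + 1) c)"
  shows "fsr_cycles m (feedback_of_windows (\<Union>c\<in>C. Omega_k (m + 1) c)) C"
proof -
  define U where "U = (\<Union>c\<in>C. Omega_k (m + 1) c)"
  define W where "W = (\<Union>c\<in>C. Omega_k m c)"
  define f1 where "f1 = feedback_of_windows U"
  have lbit_U: "lbit m ` U = W" and butlast_U: "butlast ` U = W"
    unfolding U_def W_def image_UN
    using cycles lbit_image_Omega_k butlast_image_Omega_k by simp_all
  have "finite U"
    by (rule finite_subset[OF _ finite_lists_length[of "m + 1"]])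
      (auto simp: U_def dest: Omega_k_length)
  moreover have "card (butlast ` U) = card U"
    using card_image[OF inj_lbit[folded U_def]] lbit_U butlast_U by simp
  ultimately have inj_butlast: "inj_on butlast U" by (rule eq_card_imp_inj_on)
  have window_in_U: "window s t (m + 1) \<in> U" if "c \<in> C" "s \<in> c" for c s t
    unfolding U_def using window_in_Omega_k cycles that by blast
  have generated: "generates m f1 s" if "c \<in> C" "s \<in> c" for c s
    unfolding generates_def
  proof
    fix t
    have "butlast (window s t (m + 1)) = window s t m" by (simp add: window_Suc_snoc)
    then have "f1 (window s t m) \<longleftrightarrow> last (window s t (m + 1))"
      unfolding f1_def feedback_of_windows_def
      using window_in_U[OF that] inj_butlast by (metis inj_onD)
    then show "s (t + int m) = f1 (window s t m)" using last_window[of s t m] by simp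
  qed
  have fsr_F_butlast: "fsr_F f1 (butlast v) = lbit m v" if "v \<in> U" for v
  proof -
    obtain c s where cs: "c \<in> C" "s \<in> c" "v = window s 0 (m + 1)"
      using \<open>v \<in> U\<close> unfolding U_def by (auto elim: Omega_kE)
    have "butlast v = window s 0 m" using cs(3) by (simp add: window_Suc_snoc)
    moreover have "lbit m v = window s 1 m" using cs(3) lbit_window[of m s 0] by simp
    ultimately show ?thesis using fsr_F_window[OF m generated[OF cs(1,2)], of 0] by simp
  qed
  have "inj_on (fsr_F f1) W"
  proof (rule inj_onI)
    fix x y assume "x \<in> W" "y \<in> W" and eq: "fsr_F f1 x = fsr_F f1 y"
    then obtain v w where "v \<in> U" "w \<in> U" "x = butlast v" "y = butlast w"
      using butlast_U by blast
    then show "x = y"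
      using eq fsr_F_butlast inj_lbit[folded U_def] by (metis inj_onD)
  qed
  then have "fsr_cycles m f1 C"
    using m cycles generated by unfold_locales (auto simp: W_def)
  then show ?thesis by (simp add: f1_def U_def)
qed

theorem lemma4:
  fixes C :: "(int \<Rightarrow> bool) set set" and m :: nat
  assumes "\<forall>c\<in>C. is_cycle c" and "m \<ge> 1"
  shows "(\<exists>f1. nonsingular m f1 \<and> cycle_structure m f1 = C) \<longleftrightarrow>
         ((\<Sum>c\<in>C. per c) = 2 ^ m \<and> inj_on (lbit m) (\<Union>c\<in>C. Omega_k (m + 1) c))"
proof
  assume "\<exists>f1. nonsingular m f1 \<and> cycle_structure m f1 = C"
  then obtain f1 where ns: "nonsingular m f1" and C: "cycle_structure m f1 = C" by blast
  interpret fsr_cycles m f1 C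
    using fsr_cycles_cycle_structure[OF assms(2) ns] C by simp
  have "(\<Sum>c\<in>C. per c) = 2 ^ m"
    using card_states states_cycle_structure[OF assms(2) ns] card_lists_length C by simp
  then show "(\<Sum>c\<in>C. per c) = 2 ^ m \<and> inj_on (lbit m) (\<Union>c\<in>C. Omega_k (m + 1) c)"
    using inj_on_lbit by simp
next
  assume rhs: "(\<Sum>c\<in>C. per c) = 2 ^ m \<and> inj_on (lbit m) (\<Union>c\<in>C. Omega_k (m + 1) c)"
  interpret fsr_cycles m "feedback_of_windows (\<Union>c\<in>C. Omega_k (m + 1) c)" C
    using fsr_cycles_feedback_of_windows[OF assms(2,1)] rhs by simp
  show "\<exists>f1. nonsingular m f1 \<and> cycle_structure m f1 = C"
    using nonsingular_and_cycle_structure rhs by auto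
qed

end
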